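(* Let $(a_j)_{j\in\mathbb{N}_0}$ be a complex sequence with $\sum_{j=0}^\infty|a_j|<\infty$ and let $(b_j)_{j\in\mathbb{N}_0}$ be a strictly increasing sequence of positive reals with $b_j\to\infty$. Set $b_{-1}=0$ and $$\Delta b_j=\min(b_j-b_{j-1},\,b_{j+1}-b_j),\qquad j\ge0.$$ Suppose $a_j\Delta b_j\not\to0$ as $j\to\infty$. Let $f(t)=\sum_{j=0}^\infty a_je^{i b_jt}$. Then $f$ is bounded and continuous on $\mathbb{R}$ but differentiable at no point of $\mathbb{R}$. If in addition $\sup_j|a_j|\Delta b_j=\infty$, then $f$ is not Lipschitz continuous at any $t_0\in\mathbb{R}$. The same conclusions hold for $\operatorname{Re}f$ and $\operatorname{Im}f$.
   Context: A function $g\colon\mathbb{R}\to\mathbb{C}$ is Lipschitz continuous at $t_0$ if there exist constants $L>0$, $\eta>0$ such that $|g(t)-g(t_0)|\le L|t-t_0|$ for all $t\in\,]t_0-\eta,t_0+\eta[$. *)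

theory Defs
  imports "HOL-Analysis.Analysis"
begin

definition delta_b :: "(nat \<Rightarrow> real) \<Rightarrow> nat \<Rightarrow> real" where
  "delta_b b j = min (b j - (if j = 0 then 0 else b (j - 1))) (b (Suc j) - b j)"

definition lipschitz_at :: "(real \<Rightarrow> 'a::real_normed_vector) \<Rightarrow> real \<Rightarrow> bool" where
  "lipschitz_at g t0 \<longleftrightarrow> (\<exists>L>0. \<exists>\<eta>>0. \<forall>t. t0 - \<eta> < t \<and> t < t0 + \<eta> \<longrightarrow>
       norm (g t - g t0) \<le> L * \<bar>t - t0\<bar>)"

end

theory Submission
  imports Defs "HOL-Complex_Analysis.Complex_Analysis" "HOL-Probability.Sinc_Integral"
begin

text \<open>
  The proof pairs increments of the series with the kernel K(s) = sinc(c s)^4. This kernel is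
  integrable together with its first two moments, and its Fourier transform vanishes outside
  [-4c, 4c]: for such frequencies s^k sinc(c s)^4 e^(i beta s) extends to an entire function
  decaying like |z|^-2 in a half plane, so its integral over the real line is zero by Cauchy's
  theorem on rectangles. With c = Delta b_j / 4 the pairing of f(t + s) - f(t) - A s with
  K(s) e^(-i b_j s) therefore picks out exactly a_j e^(i b_j t) times the integral of K, the
  constant and linear parts being annihilated. If f is differentiable at t the increment is
  o(|s|) near 0 and O(s^2) globally, and comparing both sides gives |a_j| Delta b_j --> 0; if f
  is merely Lipschitz at t the same comparison bounds |a_j| Delta b_j. Re f and Im f are series
  of the same kind, with frequencies +-b_j and coefficients of modulus |a_j| / 2.
\<close>

section \<open>The kernel sinc(c s)^4\<close>

definition csinc :: "complex \<Rightarrow> complex" where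
  "csinc z = (if z = 0 then 1 else sin z / z)"

lemma csinc_of_real: "csinc (of_real x) = of_real (sinc x)"
  by (simp add: csinc_def sin_of_real)

lemma holomorphic_csinc: "csinc holomorphic_on UNIV"
proof -
  have "csinc field_differentiable at z" for z
  proof (cases "z = 0")
    case True
    then show ?thesis
      using has_field_derivative_sin_z_over_z[of UNIV]
      by (auto simp: csinc_def[abs_def] field_differentiable_def)
  next
    case False
    have "(\<lambda>w. sin w / w) field_differentiable at z"
      using False
      by (intro field_differentiable_divide field_differentiable_at_sin field_differentiable_ident) auto
    moreover have "sin w / w = csinc w" if "dist w z < norm z" for w
      using that by (auto simp: csinc_def dist_norm)
    ultimately show ?thesis
      using False field_differentiable_transform_within[of "norm z" z UNIV "\<lambda>w. sin w / w" csinc]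
      by simp
  qed
  then show ?thesis by (simp add: holomorphic_on_def field_differentiable_at_within)
qed

lemma holomorphic_on_csinc [holomorphic_intros]:
  "g holomorphic_on A \<Longrightarrow> (\<lambda>z. csinc (g z)) holomorphic_on A"
  using holomorphic_on_compose_gen[of g A csinc UNIV] holomorphic_csinc by (simp add: o_def)

lemma norm_csinc_le: "z \<noteq> 0 \<Longrightarrow> norm (csinc z) \<le> exp \<bar>Im z\<bar> / norm z"
  using cmod_sin_le_exp[of 1 z] by (simp add: csinc_def norm_divide divide_right_mono)

text \<open>
  The library's sinc is an abbreviation for an if-expression; wrapping sinc(c s)^4 in a
  definition keeps the simplifier from splitting it.
\<close>

definition sinc4 :: "real \<Rightarrow> real \<Rightarrow> real" where
  "sinc4 c s = sinc (c * s) ^ 4"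

lemma sinc4_nonneg: "0 \<le> sinc4 c s"
  unfolding sinc4_def by (rule zero_le_even_power) simp

lemma sinc4_one_mult: "sinc4 1 (c * s) = sinc4 c s"
  by (simp add: sinc4_def)

lemma sinc4_0 [simp]: "sinc4 c 0 = 1"
  by (simp add: sinc4_def)

lemma borel_measurable_sinc4 [measurable]: "sinc4 c \<in> borel_measurable borel"
  unfolding sinc4_def[abs_def] by measurable

lemma continuous_sinc4: "isCont (sinc4 c) s"
  unfolding sinc4_def[abs_def] by (intro continuous_intros isCont_o2[OF _ isCont_sinc])

lemma of_real_sinc4: "of_real (sinc4 c s) = csinc (of_real c * of_real s) ^ 4"
  by (simp only: sinc4_def of_real_power csinc_of_real[symmetric] of_real_mult)

lemma abs_power_mult_power4_le:
  fixes x y :: real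
  assumes y1: "\<bar>y\<bar> \<le> 1" and yx: "x \<noteq> 0 \<Longrightarrow> \<bar>y\<bar> \<le> 1 / \<bar>x\<bar>" and k: "k \<le> 2"
  shows "\<bar>x\<bar> ^ k * y ^ 4 \<le> 2 / (1 + x\<^sup>2)"
proof (cases "\<bar>x\<bar> \<le> 1")
  case True
  have "y ^ 4 \<le> 1"
    using power_le_one[of "\<bar>y\<bar>" 4] y1 by (simp add: power_even_abs_numeral)
  then have "\<bar>x\<bar> ^ k * y ^ 4 \<le> 1"
    using True by (intro mult_le_one[OF power_le_one]) (auto simp: zero_le_even_power)
  moreover have "1 \<le> 2 / (1 + x\<^sup>2)"
    using True abs_square_le_1[of x] by (simp add: le_divide_eq add_pos_nonneg)
  ultimately show ?thesis by linarith
next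
  case False
  then have x: "1 < \<bar>x\<bar>" "x \<noteq> 0" by auto
  have "y ^ 4 \<le> (1 / \<bar>x\<bar>) ^ 4"
    using power_mono[of "\<bar>y\<bar>" "1 / \<bar>x\<bar>" 4] yx x by (simp add: power_even_abs_numeral)
  moreover have "\<bar>x\<bar> ^ k \<le> \<bar>x\<bar>\<^sup>2"
    using x k by (intro power_increasing) auto
  ultimately have "\<bar>x\<bar> ^ k * y ^ 4 \<le> \<bar>x\<bar>\<^sup>2 * (1 / \<bar>x\<bar>) ^ 4"
    by (intro mult_mono) (auto simp: zero_le_even_power)
  also have "\<dots> = 1 / x\<^sup>2"
    using x by (simp add: power_divide eval_nat_numeral)
  also have "\<dots> \<le> 2 / (1 + x\<^sup>2)"
  proof -
    have "1 \<le> x\<^sup>2" using x abs_square_le_1[of x] by linarith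
    moreover have "0 < x\<^sup>2" using x by simp
    ultimately show ?thesis by (simp add: divide_simps add_pos_nonneg)
  qed
  finally show ?thesis .
qed

lemma abs_power_mult_sinc4_le:
  "k \<le> 2 \<Longrightarrow> \<bar>c * s\<bar> ^ k * sinc4 c s \<le> 2 / (1 + (c * s)\<^sup>2)"
  unfolding sinc4_def
  by (rule abs_power_mult_power4_le) (auto simp: abs_sin_x_le_abs_x abs_divide divide_right_mono)

lemma integrable_if_norm_le_weighted_sinc4:
  fixes h :: "real \<Rightarrow> 'a::{banach, second_countable_topology}"
  assumes c: "0 < c" and k: "k \<le> 2" and h: "h \<in> borel_measurable lborel"
    and le: "\<And>s. norm (h s) \<le> B * (\<bar>s\<bar> ^ k * sinc4 c s)"
  shows "integrable lborel h"
proof (rule Bochner_Integration.integrable_bound[OF _ h])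
  have "integrable lborel (\<lambda>x::real. inverse (1 + x\<^sup>2))"
    using integrable_inverse_1_plus_square by (simp add: set_integrable_def einterval_eq_UNIV)
  from lborel_integrable_real_affine[OF this, of c 0] c
  show "integrable lborel (\<lambda>s. \<bar>B\<bar> * (2 / c ^ k) * inverse (1 + (c * s)\<^sup>2))"
    by simp
  show "AE s in lborel. norm (h s) \<le> norm (\<bar>B\<bar> * (2 / c ^ k) * inverse (1 + (c * s)\<^sup>2))"
  proof (rule AE_I2)
    fix s
    have "c ^ k * (\<bar>s\<bar> ^ k * sinc4 c s) \<le> 2 / (1 + (c * s)\<^sup>2)"
      using abs_power_mult_sinc4_le[OF k, of c s] c
      by (simp add: abs_mult power_mult_distrib mult.assoc)
    then have "\<bar>s\<bar> ^ k * sinc4 c s \<le> 2 / (1 + (c * s)\<^sup>2) / c ^ k"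
      using c by (subst pos_le_divide_eq) (simp_all add: mult.commute)
    also have "\<dots> = (2 / c ^ k) * inverse (1 + (c * s)\<^sup>2)"
      by (simp add: divide_inverse mult_ac)
    finally have "\<bar>s\<bar> ^ k * sinc4 c s \<le> (2 / c ^ k) * inverse (1 + (c * s)\<^sup>2)" .
    then have "norm (h s) \<le> \<bar>B\<bar> * ((2 / c ^ k) * inverse (1 + (c * s)\<^sup>2))"
      using le[of s] sinc4_nonneg[of c s]
      by (smt (verit) abs_ge_zero mult_mono zero_le_power zero_le_mult_iff)
    then show "norm (h s) \<le> norm (\<bar>B\<bar> * (2 / c ^ k) * inverse (1 + (c * s)\<^sup>2))"
      using c by (simp add: abs_mult add_pos_nonneg mult.assoc)
  qed
qed

lemma integrable_abs_power_mult_sinc4: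
  "0 < c \<Longrightarrow> k \<le> 2 \<Longrightarrow> integrable lborel (\<lambda>s. \<bar>s\<bar> ^ k * sinc4 c s)"
  by (rule integrable_if_norm_le_weighted_sinc4[where B = 1]) (auto simp: sinc4_nonneg)

lemma integrable_power_sinc4_cis:
  assumes "0 < c" "k \<le> 2"
  shows "integrable lborel (\<lambda>s. of_real (s ^ k * sinc4 c s) * cis (\<beta> * s))"
  by (rule integrable_if_norm_le_weighted_sinc4[OF assms, where B = 1])
     (auto simp: norm_mult norm_power sinc4_nonneg cis_conv_exp)

section \<open>Vanishing of the Fourier transform of the kernel outside [-4c, 4c]\<close>

lemma norm_integral_interval_le_if_upper_half_plane_bound:
  fixes G :: "complex \<Rightarrow> complex"
  assumes holo: "G holomorphic_on UNIV" and R: "0 < R"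
    and bound: "\<And>z. 0 \<le> Im z \<Longrightarrow> R \<le> norm z \<Longrightarrow> norm (G z) \<le> K"
  shows "norm (integral {-R..R} (\<lambda>x. G (of_real x))) \<le> 4 * R * K"
proof -
  have K: "0 \<le> K"
    using bound[of "of_real R"] R norm_ge_zero[of "G (of_real R)"] by (simp del: norm_ge_zero)
  define p1 p2 p3 p4 where "p1 = Complex (-R) 0" and "p2 = Complex R 0"
    and "p3 = Complex R R" and "p4 = Complex (-R) R"
  define I where "I p q = contour_integral (linepath p q) G" for p q
  note integrable = contour_integrable_holomorphic_simple[OF holo open_UNIV, of "linepath _ _"]
  have side: "norm (I p q) \<le> K * norm (q - p)"
    if "\<And>z. z \<in> closed_segment p q \<Longrightarrow> 0 \<le> Im z \<and> R \<le> norm z" for p q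
    unfolding I_def using that bound K by (intro contour_integral_bound_linepath integrable) auto
  have "contour_integral (linepath p1 p2 +++ (linepath p2 p3 +++ (linepath p3 p4 +++ linepath p4 p1))) G = 0"
    by (intro contour_integral_unique Cauchy_theorem_convex_simple[OF holo]
        valid_path_join valid_path_linepath) auto
  then have "I p1 p2 + (I p2 p3 + (I p3 p4 + I p4 p1)) = 0"
    by (simp add: I_def contour_integral_join valid_path_join integrable)
  then have "I p1 p2 = - (I p2 p3 + I p3 p4 + I p4 p1)"
    by (simp add: add_eq_0_iff add.assoc)
  then have "norm (I p1 p2) \<le> norm (I p2 p3) + norm (I p3 p4) + norm (I p4 p1)"
    by (simp only: norm_minus_cancel) (intro norm_triangle_le add_mono norm_triangle_ineq order_refl)
  moreover have "I p1 p2 = integral {-R..R} (\<lambda>x. G (of_real x))"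
    using R by (simp add: I_def p1_def p2_def contour_integral_linepath_Reals_eq complex_is_Real_iff)
  moreover have "norm (I p2 p3) \<le> K * R"
    using side[of p2 p3] R abs_Re_le_cmod
    by (force simp: p2_def p3_def closed_segment_same_Re closed_segment_eq_real_ivl cmod_def)
  moreover have "norm (I p3 p4) \<le> K * (2 * R)"
  proof -
    have "p4 - p3 = of_real (- 2 * R)"
      by (simp add: p3_def p4_def complex_eq_iff)
    then have "norm (p4 - p3) = 2 * R"
      using R by simp
    moreover have "0 \<le> Im z \<and> R \<le> norm z" if "z \<in> closed_segment p3 p4" for z
    proof -
      have "Im z = R"
        using that by (simp add: p3_def p4_def closed_segment_same_Im)
      then show ?thesis
        using R abs_Im_le_cmod[of z] by linarith
    qed
    ultimately show ?thesis using side[of p3 p4] by simp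
  qed
  moreover have "norm (I p4 p1) \<le> K * R"
    using side[of p4 p1] R abs_Re_le_cmod
    by (force simp: p4_def p1_def closed_segment_same_Re closed_segment_eq_real_ivl cmod_def)
  ultimately show ?thesis
    by (simp add: algebra_simps)
qed

lemma tendsto_integral_interval_lborel:
  fixes f :: "real \<Rightarrow> 'a::euclidean_space"
  assumes f: "integrable lborel f"
  shows "((\<lambda>R. integral {-R..R} f) \<longlongrightarrow> integral\<^sup>L lborel f) at_top"
proof -
  define s where "s R x = indicator {-R..R} x *\<^sub>R f x" for R x
  have s: "integrable lborel (s R)" for R
    unfolding s_def using f by (intro integrable_mult_indicator) auto
  have "integral\<^sup>L lborel (s R) = integral {-R..R} f" for R
    using set_borel_integral_eq_integral(2)[of "{-R..R}" f] s[of R]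
    unfolding s_def[abs_def] set_integrable_def set_lebesgue_integral_def by simp
  moreover have "((\<lambda>R. integral\<^sup>L lborel (s R)) \<longlongrightarrow> integral\<^sup>L lborel f) at_top"
  proof (rule integral_dominated_convergence_at_top[where w = "\<lambda>x. norm (f x)"])
    show "AE x in lborel. ((\<lambda>R. s R x) \<longlongrightarrow> f x) at_top"
    proof (rule AE_I2)
      fix x
      have "eventually (\<lambda>R. s R x = f x) at_top"
        using eventually_ge_at_top[of "\<bar>x\<bar>"]
        by eventually_elim (simp add: s_def indicator_def abs_le_iff)
      then show "((\<lambda>R. s R x) \<longlongrightarrow> f x) at_top" by (rule tendsto_eventually)
    qed
    show "\<forall>\<^sub>F R in at_top. AE x in lborel. norm (s R x) \<le> norm (f x)"
      by (intro always_eventually allI AE_I2) (simp add: s_def indicator_def)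
    show "f \<in> borel_measurable lborel" "integrable lborel (\<lambda>x. norm (f x))"
      using f by auto
    show "s R \<in> borel_measurable lborel" for R
      using s[of R] by auto
  qed
  ultimately show ?thesis by simp
qed

lemma lborel_integral_eq_0_if_upper_half_plane_decay:
  fixes G :: "complex \<Rightarrow> complex"
  assumes holo: "G holomorphic_on UNIV" and int: "integrable lborel (\<lambda>x. G (of_real x))"
    and decay: "\<And>z. 0 \<le> Im z \<Longrightarrow> 1 \<le> norm z \<Longrightarrow> norm (G z) \<le> C / (norm z)\<^sup>2"
  shows "integral\<^sup>L lborel (\<lambda>x. G (of_real x)) = 0"
proof -
  have C: "0 \<le> C"
    using decay[of 1] norm_ge_zero[of "G 1"] by (simp del: norm_ge_zero)
  have bound: "norm (integral {-R..R} (\<lambda>x. G (of_real x))) \<le> 4 * C / R" if R: "1 \<le> R" for R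
  proof -
    have "norm (G z) \<le> C / R\<^sup>2" if "0 \<le> Im z" "R \<le> norm z" for z
    proof -
      have "norm (G z) \<le> C / (norm z)\<^sup>2"
        using that R by (intro decay) auto
      also have "\<dots> \<le> C / R\<^sup>2"
        using that R C by (intro divide_left_mono power_mono mult_pos_pos) auto
      finally show ?thesis .
    qed
    then have "norm (integral {-R..R} (\<lambda>x. G (of_real x))) \<le> 4 * R * (C / R\<^sup>2)"
      using R by (intro norm_integral_interval_le_if_upper_half_plane_bound[OF holo]) auto
    then show ?thesis
      using R by (simp add: power2_eq_square)
  qed
  have "eventually (\<lambda>R. norm (integral {-R..R} (\<lambda>x. G (of_real x))) \<le> 4 * C / R) at_top"
    using eventually_ge_at_top[of 1] by eventually_elim (rule bound)
  moreover have "((\<lambda>R. 4 * C / R) \<longlongrightarrow> 0) at_top"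
    by (intro tendsto_divide_0[OF tendsto_const] filterlim_at_top_imp_at_infinity[OF filterlim_ident])
  ultimately have "((\<lambda>R. integral {-R..R} (\<lambda>x. G (of_real x))) \<longlongrightarrow> 0) at_top"
    by (rule Lim_null_comparison)
  then show ?thesis
    using tendsto_integral_interval_lborel[OF int] by (rule tendsto_unique[OF trivial_limit_at_top_linorder, symmetric])
qed

text \<open>The factor csinc(c z)^4 grows at most like exp(4 c Im z), which exp(i beta z) compensates.\<close>

lemma integral_power_sinc4_cis_eq_0_nonneg:
  assumes c: "0 < c" and k: "k \<le> 1" and \<beta>: "4 * c \<le> \<beta>"
  shows "integral\<^sup>L lborel (\<lambda>s. of_real (s ^ k * sinc4 c s) * cis (\<beta> * s)) = 0"
proof -
  define G where "G z = z ^ k * csinc (of_real c * z) ^ 4 * exp (\<i> * of_real \<beta> * z)" for z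
  have G: "G (of_real s) = of_real (s ^ k * sinc4 c s) * cis (\<beta> * s)" for s
    by (simp add: G_def of_real_sinc4 cis_conv_exp mult.assoc)
  have "integral\<^sup>L lborel (\<lambda>s. G (of_real s)) = 0"
  proof (rule lborel_integral_eq_0_if_upper_half_plane_decay[where C = "1 / c ^ 4"])
    show "G holomorphic_on UNIV"
      unfolding G_def by (intro holomorphic_intros)
    show "integrable lborel (\<lambda>s. G (of_real s))"
      unfolding G using integrable_power_sinc4_cis[OF c] k by simp
    fix z :: complex
    assume y: "0 \<le> Im z" and z: "1 \<le> norm z"
    have cz: "of_real c * z \<noteq> 0" "norm (of_real c * z) = c * norm z"
      using c z by (auto simp: norm_mult)
    have "norm (csinc (of_real c * z)) \<le> exp (c * Im z) / (c * norm z)"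
      using norm_csinc_le[OF cz(1)] c y by (simp add: cz(2) abs_mult)
    then have "norm (csinc (of_real c * z) ^ 4) \<le> (exp (c * Im z) / (c * norm z)) ^ 4"
      unfolding norm_power by (rule power_mono) simp
    also have "\<dots> = exp (4 * c * Im z) / (c ^ 4 * norm z ^ 4)"
      by (simp add: power_divide power_mult_distrib exp_of_nat_mult[symmetric] mult.assoc)
    finally have csinc4: "norm (csinc (of_real c * z) ^ 4) \<le> exp (4 * c * Im z) / (c ^ 4 * norm z ^ 4)" .
    have "norm (G z) = norm z ^ k * norm (csinc (of_real c * z) ^ 4) * exp (- \<beta> * Im z)"
      unfolding G_def by (simp add: norm_mult norm_power norm_exp_eq_Re)
    also have "\<dots> \<le> norm z ^ k * (exp (4 * c * Im z) / (c ^ 4 * norm z ^ 4)) * exp (- \<beta> * Im z)"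
      by (intro mult_right_mono mult_left_mono csinc4) auto
    also have "\<dots> = norm z ^ k / (c ^ 4 * norm z ^ 4) * exp ((4 * c - \<beta>) * Im z)"
      by (simp add: exp_add[symmetric] algebra_simps)
    also have "\<dots> \<le> norm z ^ 2 / (c ^ 4 * norm z ^ 4) * 1"
      using c z k y \<beta>
      by (intro mult_mono divide_right_mono power_increasing)
        (auto simp: mult_nonpos_nonneg)
    also have "\<dots> = (1 / c ^ 4) / (norm z)\<^sup>2"
      using z by (simp add: field_simps eval_nat_numeral)
    finally show "norm (G z) \<le> (1 / c ^ 4) / (norm z)\<^sup>2" .
  qed
  then show ?thesis by (simp add: G)
qed

lemma integral_power_sinc4_cis_eq_0:
  assumes c: "0 < c" and k: "k \<le> 1" and \<beta>: "4 * c \<le> \<bar>\<beta>\<bar>"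
  shows "integral\<^sup>L lborel (\<lambda>s. of_real (s ^ k * sinc4 c s) * cis (\<beta> * s)) = 0"
proof (cases "0 \<le> \<beta>")
  case True
  then show ?thesis
    using integral_power_sinc4_cis_eq_0_nonneg[OF c k] \<beta> by simp
next
  case False
  have "cnj (of_real (s ^ k * sinc4 c s) * cis (- \<beta> * s))
      = of_real (s ^ k * sinc4 c s) * cis (\<beta> * s)" for s
    by (simp add: cis_cnj)
  then have "integral\<^sup>L lborel (\<lambda>s. of_real (s ^ k * sinc4 c s) * cis (\<beta> * s))
      = integral\<^sup>L lborel (\<lambda>s. cnj (of_real (s ^ k * sinc4 c s) * cis (- \<beta> * s)))"
    by presburger
  also have "\<dots> = cnj (integral\<^sup>L lborel (\<lambda>s. of_real (s ^ k * sinc4 c s) * cis (- \<beta> * s)))"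
    by (rule Bochner_Integration.integral_cnj)
  also have "\<dots> = 0"
    using integral_power_sinc4_cis_eq_0_nonneg[OF c k, of "- \<beta>"] \<beta> False by simp
  finally show ?thesis .
qed

definition sinc4_moment :: "nat \<Rightarrow> real" where
  "sinc4_moment k = integral\<^sup>L lborel (\<lambda>s. \<bar>s\<bar> ^ k * sinc4 1 s)"

lemma sinc4_moment_nonneg: "0 \<le> sinc4_moment k"
  unfolding sinc4_moment_def by (intro integral_nonneg_AE AE_I2 mult_nonneg_nonneg sinc4_nonneg) auto

lemma sinc4_moment_0_pos: "0 < sinc4_moment 0"
proof -
  have "(sinc4 1 \<longlongrightarrow> 1) (at 0)"
    using continuous_sinc4[where c = 1 and s = 0] by (simp add: isCont_def)
  then have "eventually (\<lambda>x. 1 / 2 < sinc4 1 x) (at 0)"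
    by (rule order_tendstoD) simp
  then obtain d where d: "0 < d" and near: "\<And>x. x \<noteq> 0 \<Longrightarrow> \<bar>x\<bar> < d \<Longrightarrow> 1 / 2 < sinc4 1 x"
    by (auto simp: eventually_at dist_real_def)
  have lower: "indicator {-d/2..d/2} x / 2 \<le> sinc4 1 x" for x
    using near[of x] d sinc4_nonneg[of 1 x] by (cases "x = 0") (auto simp: indicator_def abs_less_iff)
  have "0 < d / 2"
    using d by simp
  also have "d / 2 = integral\<^sup>L lborel (\<lambda>x. indicator {-d/2..d/2} x / 2 :: real)"
    using d by simp
  also have "\<dots> \<le> sinc4_moment 0"
    unfolding sinc4_moment_def using integrable_abs_power_mult_sinc4[of 1 0] lower
    by (intro integral_mono) (auto simp: integrable_indicator_iff emeasure_lborel_Icc_eq)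
  finally show ?thesis .
qed

lemma integral_abs_power_mult_sinc4:
  assumes c: "0 < c" and k: "k \<le> 2"
  shows "integral\<^sup>L lborel (\<lambda>s. \<bar>s\<bar> ^ k * sinc4 c s) = sinc4_moment k / c ^ (k + 1)"
proof -
  have "sinc4_moment k = c * integral\<^sup>L lborel (\<lambda>s. \<bar>0 + c * s\<bar> ^ k * sinc4 1 (0 + c * s))"
    unfolding sinc4_moment_def
    using c lborel_integral_real_affine[where c = c and t = 0 and f = "\<lambda>s. \<bar>s\<bar> ^ k * sinc4 1 s"]
    by simp
  also have "\<dots> = c * integral\<^sup>L lborel (\<lambda>s. c ^ k * (\<bar>s\<bar> ^ k * sinc4 c s))"
    using c by (simp add: sinc4_one_mult abs_mult power_mult_distrib mult.assoc)
  also have "\<dots> = c ^ (k + 1) * integral\<^sup>L lborel (\<lambda>s. \<bar>s\<bar> ^ k * sinc4 c s)"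
    by simp
  finally show ?thesis
    using c by (simp add: field_simps)
qed

section \<open>Trigonometric series and their coefficients\<close>

text \<open>
  Frequencies b k and -b k carry separate coefficients, so that f as well as Re f and Im f are
  instances.
\<close>

definition trig_series :: "(nat \<Rightarrow> complex) \<Rightarrow> (nat \<Rightarrow> complex) \<Rightarrow> (nat \<Rightarrow> real) \<Rightarrow> real \<Rightarrow> complex"
  where "trig_series p q b t = (\<Sum>k. p k * cis (b k * t) + q k * cis (- (b k * t)))"

lemma norm_trig_series_term_le:
  "norm (p k * cis (b k * t) + q k * cis (- (b k * t))) \<le> norm (p k) + norm (q k)"
  using norm_triangle_ineq[of "p k * cis (b k * t)" "q k * cis (- (b k * t))"] by (simp add: norm_mult)

lemma summable_trig_series_terms:
  assumes "summable (\<lambda>k. norm (p k))" "summable (\<lambda>k. norm (q k))"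
  shows "summable (\<lambda>k. norm (p k * cis (b k * t) + q k * cis (- (b k * t))))"
  by (rule summable_comparison_test'[OF summable_add[OF assms]]) (simp add: norm_trig_series_term_le)

lemma norm_trig_series_le:
  assumes "summable (\<lambda>k. norm (p k))" "summable (\<lambda>k. norm (q k))"
  shows "norm (trig_series p q b t) \<le> (\<Sum>k. norm (p k) + norm (q k))"
  unfolding trig_series_def
  using summable_norm[OF summable_trig_series_terms[OF assms]]
    suminf_le[OF _ summable_trig_series_terms[OF assms] summable_add[OF assms]]
    norm_trig_series_term_le
  by (meson order_trans)

lemma continuous_on_trig_series:
  assumes "summable (\<lambda>k. norm (p k))" "summable (\<lambda>k. norm (q k))"
  shows "continuous_on UNIV (trig_series p q b)"
proof -
  have lim: "uniform_limit UNIV (\<lambda>n t. \<Sum>k<n. p k * cis (b k * t) + q k * cis (- (b k * t)))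
      (trig_series p q b) sequentially"
    unfolding trig_series_def[abs_def]
    by (rule Weierstrass_m_test[OF _ summable_add[OF assms]]) (simp add: norm_trig_series_term_le)
  show ?thesis
    by (rule uniform_limit_theorem[OF _ lim]) (auto intro!: always_eventually continuous_intros)
qed

lemma integral_trig_series_sinc4_cis:
  fixes p q :: "nat \<Rightarrow> complex" and b :: "nat \<Rightarrow> real"
  assumes c: "0 < c" and sp: "summable (\<lambda>k. norm (p k))" and sq: "summable (\<lambda>k. norm (q k))"
    and gap_diff: "\<And>k. k \<noteq> j \<Longrightarrow> 4 * c \<le> \<bar>b k - b j\<bar>"
    and gap_sum: "\<And>k. 4 * c \<le> \<bar>b k + b j\<bar>"
  shows "integrable lborel (\<lambda>s. trig_series p q b (t + s) * of_real (sinc4 c s) * cis (- (b j * s)))"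
    and "integral\<^sup>L lborel (\<lambda>s. trig_series p q b (t + s) * of_real (sinc4 c s) * cis (- (b j * s)))
           = p j * cis (b j * t) * of_real (sinc4_moment 0 / c)"
proof -
  define K where "K \<beta> s = of_real (sinc4 c s) * cis (\<beta> * s)" for \<beta> s
  have K_int: "integrable lborel (K \<beta>)" for \<beta>
    using integrable_power_sinc4_cis[OF c, of 0 \<beta>] by (simp add: K_def[abs_def])
  have K_0: "integral\<^sup>L lborel (K 0) = of_real (sinc4_moment 0 / c)"
    using integral_abs_power_mult_sinc4[OF c, of 0] by (simp add: K_def[abs_def])
  have K_far: "integral\<^sup>L lborel (K \<beta>) = 0" if "4 * c \<le> \<bar>\<beta>\<bar>" for \<beta>
    using integral_power_sinc4_cis_eq_0[OF c _ that, of 0] by (simp add: K_def[abs_def])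
  define u where "u k s = p k * cis (b k * t) * K (b k - b j) s + q k * cis (- (b k * t)) * K (- b k - b j) s"
    for k s
  have summand: "(p k * cis (b k * (t + s)) + q k * cis (- (b k * (t + s))))
      * (of_real (sinc4 c s) * cis (- (b j * s))) = u k s" for k s
  proof -
    have "cis (b k * (t + s)) * cis (- (b j * s)) = cis (b k * t) * cis ((b k - b j) * s)"
      "cis (- (b k * (t + s))) * cis (- (b j * s)) = cis (- (b k * t)) * cis ((- b k - b j) * s)"
      by (simp_all add: cis_mult) (rule arg_cong[where f = cis], simp add: algebra_simps)+
    then show ?thesis
      unfolding u_def K_def by (simp add: algebra_simps)
  qed
  have norm_u: "norm (u k s) \<le> (norm (p k) + norm (q k)) * sinc4 c s" for k s
  proof -
    have "norm (u k s) \<le> norm (p k * cis (b k * t) * K (b k - b j) s)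
        + norm (q k * cis (- (b k * t)) * K (- b k - b j) s)"
      unfolding u_def by (rule norm_triangle_ineq)
    also have "\<dots> = (norm (p k) + norm (q k)) * sinc4 c s"
      by (simp add: K_def norm_mult sinc4_nonneg algebra_simps)
    finally show ?thesis .
  qed
  have u_int: "integrable lborel (u k)" for k
    unfolding u_def[abs_def] by (intro Bochner_Integration.integrable_add integrable_mult_right K_int)
  have u_integral: "integral\<^sup>L lborel (u k) = (if k = j then p j * cis (b j * t) * of_real (sinc4_moment 0 / c) else 0)" for k
    using gap_diff[of k] gap_sum[of k] K_0 K_far
    by (simp add: u_def[abs_def] K_int abs_minus_commute[of "- b k"])
  have sinc4_int: "integrable lborel (sinc4 c)"
    using integrable_abs_power_mult_sinc4[OF c, of 0] by simp
  have norm_u_integral: "integral\<^sup>L lborel (\<lambda>s. norm (u k s)) \<le> (norm (p k) + norm (q k)) * (sinc4_moment 0 / c)" for k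
    using integral_mono[OF integrable_norm[OF u_int] integrable_mult_right[OF sinc4_int] norm_u]
      integral_abs_power_mult_sinc4[OF c, of 0]
    by simp
  have summable_u: "summable (\<lambda>k. norm (u k s))" for s
    by (rule summable_comparison_test'[OF summable_mult2[OF summable_add[OF sp sq]]]) (use norm_u in auto)
  have summable_integrals: "summable (\<lambda>k. integral\<^sup>L lborel (\<lambda>s. norm (u k s)))"
    by (rule summable_comparison_test'[OF summable_mult2[OF summable_add[OF sp sq], of "sinc4_moment 0 / c"]])
       (use norm_u_integral in \<open>auto simp: integral_nonneg_AE\<close>)
  have series: "trig_series p q b (t + s) * of_real (sinc4 c s) * cis (- (b j * s)) = (\<Sum>k. u k s)" for s
  proof -
    have "trig_series p q b (t + s) * (of_real (sinc4 c s) * cis (- (b j * s))) = (\<Sum>k. u k s)"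
      unfolding trig_series_def summand[symmetric]
      by (rule suminf_mult2[OF summable_norm_cancel[OF summable_trig_series_terms[OF sp sq]]])
    then show ?thesis
      by (simp only: mult.assoc)
  qed
  show "integrable lborel (\<lambda>s. trig_series p q b (t + s) * of_real (sinc4 c s) * cis (- (b j * s)))"
    unfolding series by (intro integrable_suminf[OF u_int AE_I2 summable_integrals] summable_u)
  have "integral\<^sup>L lborel (\<lambda>s. \<Sum>k. u k s) = (\<Sum>k. integral\<^sup>L lborel (u k))"
    by (intro integral_suminf[OF u_int AE_I2 summable_integrals] summable_u)
  also have "\<dots> = p j * cis (b j * t) * of_real (sinc4_moment 0 / c)"
    unfolding u_integral by (rule sums_unique[OF sums_single, symmetric])
  finally show "integral\<^sup>L lborel (\<lambda>s. trig_series p q b (t + s) * of_real (sinc4 c s) * cis (- (b j * s)))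
      = p j * cis (b j * t) * of_real (sinc4_moment 0 / c)"
    unfolding series .
qed

lemma integral_trig_series_increment_sinc4_cis:
  fixes p q :: "nat \<Rightarrow> complex" and b :: "nat \<Rightarrow> real"
  assumes c: "0 < c" and sp: "summable (\<lambda>k. norm (p k))" and sq: "summable (\<lambda>k. norm (q k))"
    and gap_diff: "\<And>k. k \<noteq> j \<Longrightarrow> 4 * c \<le> \<bar>b k - b j\<bar>"
    and gap_sum: "\<And>k. 4 * c \<le> \<bar>b k + b j\<bar>"
    and gap_self: "4 * c \<le> \<bar>b j\<bar>"
  shows "integral\<^sup>L lborel (\<lambda>s. (trig_series p q b (t + s) - trig_series p q b t - A * of_real s)
            * of_real (sinc4 c s) * cis (- (b j * s)))
         = p j * cis (b j * t) * of_real (sinc4_moment 0 / c)"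
proof -
  define K where "K k s = of_real (s ^ k * sinc4 c s) * cis (- b j * s)" for k :: nat and s
  have K_int: "integrable lborel (K k)" if "k \<le> 2" for k
    unfolding K_def[abs_def] using integrable_power_sinc4_cis[OF c that] .
  have K_0: "integral\<^sup>L lborel (K k) = 0" if "k \<le> 1" for k
    unfolding K_def[abs_def] using integral_power_sinc4_cis_eq_0[OF c that, of "- b j"] gap_self by simp
  have "(\<lambda>s. (trig_series p q b (t + s) - trig_series p q b t - A * of_real s)
            * of_real (sinc4 c s) * cis (- (b j * s)))
      = (\<lambda>s. trig_series p q b (t + s) * of_real (sinc4 c s) * cis (- (b j * s))
            - trig_series p q b t * K 0 s - A * K 1 s)"
    by (simp add: K_def fun_eq_iff algebra_simps)
  then show ?thesis
    using integral_trig_series_sinc4_cis[where b = b and j = j, OF c sp sq gap_diff gap_sum] K_int K_0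
    by (simp add: Bochner_Integration.integral_diff Bochner_Integration.integrable_diff)
qed

lemma norm_coeff_le_if_increment_bound:
  fixes p q :: "nat \<Rightarrow> complex" and b :: "nat \<Rightarrow> real"
  assumes c: "0 < c" and sp: "summable (\<lambda>k. norm (p k))" and sq: "summable (\<lambda>k. norm (q k))"
    and gap_diff: "\<And>k. k \<noteq> j \<Longrightarrow> 4 * c \<le> \<bar>b k - b j\<bar>"
    and gap_sum: "\<And>k. 4 * c \<le> \<bar>b k + b j\<bar>"
    and gap_self: "4 * c \<le> \<bar>b j\<bar>" and \<epsilon>: "0 \<le> \<epsilon>" and B: "0 \<le> B"
    and bound: "\<And>s. norm (trig_series p q b (t + s) - trig_series p q b t - A * of_real s)
                      \<le> \<epsilon> * \<bar>s\<bar> + B * s\<^sup>2"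
  shows "norm (p j) * sinc4_moment 0 * c\<^sup>2 \<le> \<epsilon> * sinc4_moment 1 * c + B * sinc4_moment 2"
proof -
  define g where "g s = \<epsilon> * (\<bar>s\<bar> ^ 1 * sinc4 c s) + B * (\<bar>s\<bar> ^ 2 * sinc4 c s)" for s
  have "norm (p j) * (sinc4_moment 0 / c)
      = norm (integral\<^sup>L lborel (\<lambda>s. (trig_series p q b (t + s) - trig_series p q b t - A * of_real s)
            * of_real (sinc4 c s) * cis (- (b j * s))))"
    using c sinc4_moment_0_pos
    by (simp add: norm_mult norm_divide integral_trig_series_increment_sinc4_cis[where b = b and j = j,
          OF c sp sq gap_diff gap_sum gap_self])
  also have "\<dots> \<le> integral\<^sup>L lborel (\<lambda>s. norm ((trig_series p q b (t + s) - trig_series p q b t - A * of_real s)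
            * of_real (sinc4 c s) * cis (- (b j * s))))"
    by (rule integral_norm_bound)
  also have "\<dots> \<le> integral\<^sup>L lborel g"
  proof (rule integral_mono')
    show "integrable lborel g"
      unfolding g_def
      by (intro Bochner_Integration.integrable_add integrable_mult_right integrable_abs_power_mult_sinc4[OF c])
        auto
    show "0 \<le> g s" for s
      unfolding g_def using \<epsilon> B by (simp add: sinc4_nonneg)
    fix s
    have "norm ((trig_series p q b (t + s) - trig_series p q b t - A * of_real s)
            * of_real (sinc4 c s) * cis (- (b j * s)))
        = norm (trig_series p q b (t + s) - trig_series p q b t - A * of_real s) * sinc4 c s"
      by (simp add: norm_mult sinc4_nonneg)
    also have "\<dots> \<le> (\<epsilon> * \<bar>s\<bar> + B * s\<^sup>2) * sinc4 c s"
      by (intro mult_right_mono bound sinc4_nonneg)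
    also have "\<dots> = g s"
      by (simp add: g_def algebra_simps)
    finally show "norm ((trig_series p q b (t + s) - trig_series p q b t - A * of_real s)
        * of_real (sinc4 c s) * cis (- (b j * s))) \<le> g s" .
  qed
  also have "\<dots> = \<epsilon> * integral\<^sup>L lborel (\<lambda>s. \<bar>s\<bar> ^ 1 * sinc4 c s)
      + B * integral\<^sup>L lborel (\<lambda>s. \<bar>s\<bar> ^ 2 * sinc4 c s)"
    unfolding g_def using integrable_abs_power_mult_sinc4[OF c, of 1] integrable_abs_power_mult_sinc4[OF c, of 2]
    by (subst Bochner_Integration.integral_add) (auto intro: integrable_mult_right)
  also have "\<dots> = \<epsilon> * (sinc4_moment 1 / c\<^sup>2) + B * (sinc4_moment 2 / c ^ 3)"
    using integral_abs_power_mult_sinc4[OF c, of 1] integral_abs_power_mult_sinc4[OF c, of 2]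
    by (simp add: power2_eq_square)
  finally have "norm (p j) * (sinc4_moment 0 / c) \<le> \<epsilon> * (sinc4_moment 1 / c\<^sup>2) + B * (sinc4_moment 2 / c ^ 3)" .
  then have "c ^ 3 * (norm (p j) * (sinc4_moment 0 / c)) \<le> c ^ 3 * (\<epsilon> * (sinc4_moment 1 / c\<^sup>2) + B * (sinc4_moment 2 / c ^ 3))"
    using c by (intro mult_left_mono) auto
  moreover have "c ^ 3 * (norm (p j) * (sinc4_moment 0 / c)) = norm (p j) * sinc4_moment 0 * c\<^sup>2"
    using c by (simp add: power2_eq_square power3_eq_cube)
  moreover have "c ^ 3 * (\<epsilon> * (sinc4_moment 1 / c\<^sup>2) + B * (sinc4_moment 2 / c ^ 3))
      = \<epsilon> * sinc4_moment 1 * c + B * sinc4_moment 2"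
    using c by (simp add: field_simps power2_eq_square power3_eq_cube)
  ultimately show ?thesis
    by simp
qed

section \<open>Coefficient bounds at points of differentiability and Lipschitz continuity\<close>

lemma delta_b_pos: "(\<And>j. 0 < b j) \<Longrightarrow> strict_mono b \<Longrightarrow> 0 < delta_b b j"
  unfolding delta_b_def by (auto simp: strict_mono_less)

lemma delta_b_le_dist:
  assumes "strict_mono b" "k \<noteq> j"
  shows "delta_b b j \<le> \<bar>b k - b j\<bar>"
proof (cases "k < j")
  case True
  then have "b k \<le> b (j - 1)"
    using assms(1) by (simp add: strict_mono_less_eq)
  then show ?thesis
    using True by (simp add: delta_b_def)
next
  case False
  then have "b (Suc j) \<le> b k"
    using assms by (simp add: strict_mono_less_eq)
  then show ?thesis
    by (simp add: delta_b_def)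
qed

lemma delta_b_le: "(\<And>j. 0 < b j) \<Longrightarrow> delta_b b j \<le> b j"
  by (smt (verit) delta_b_def)

lemma norm_coeff_mult_delta_b_le:
  fixes p q :: "nat \<Rightarrow> complex" and b :: "nat \<Rightarrow> real"
  assumes b_pos: "\<And>j. 0 < b j" and b_mono: "strict_mono b"
    and sp: "summable (\<lambda>k. norm (p k))" and sq: "summable (\<lambda>k. norm (q k))"
    and \<epsilon>: "0 \<le> \<epsilon>" and B: "0 \<le> B"
    and bound: "\<And>s. norm (trig_series p q b (t + s) - trig_series p q b t - A * of_real s)
                      \<le> \<epsilon> * \<bar>s\<bar> + B * s\<^sup>2"
  shows "norm (p j) * delta_b b j * sinc4_moment 0
           \<le> 4 * \<epsilon> * sinc4_moment 1 + 16 * B * sinc4_moment 2 / delta_b b j"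
proof -
  define d where "d = delta_b b j"
  have d: "0 < d"
    unfolding d_def using b_pos b_mono by (rule delta_b_pos)
  have "4 * (d / 4) \<le> \<bar>b k - b j\<bar>" if "k \<noteq> j" for k
    using delta_b_le_dist[OF b_mono that] by (simp add: d_def)
  moreover have "4 * (d / 4) \<le> \<bar>b j\<bar>" "4 * (d / 4) \<le> \<bar>b k + b j\<bar>" for k
    using delta_b_le[of b j, OF b_pos] b_pos[of j] b_pos[of k] by (simp_all add: d_def)
  ultimately have "norm (p j) * sinc4_moment 0 * (d / 4)\<^sup>2
      \<le> \<epsilon> * sinc4_moment 1 * (d / 4) + B * sinc4_moment 2"
    using d by (intro norm_coeff_le_if_increment_bound[OF _ sp sq _ _ _ \<epsilon> B bound]) auto
  then have "(16 / d) * (norm (p j) * sinc4_moment 0 * (d / 4)\<^sup>2)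
      \<le> (16 / d) * (\<epsilon> * sinc4_moment 1 * (d / 4) + B * sinc4_moment 2)"
    using d by (intro mult_left_mono) auto
  then show ?thesis
    using d by (simp add: d_def[symmetric] power2_eq_square field_simps)
qed

lemma norm_increment_le_if_local_bound:
  fixes F :: "real \<Rightarrow> 'a::real_normed_algebra_1"
  assumes M: "\<And>t. norm (F t) \<le> M" and \<delta>: "0 < \<delta>" and \<epsilon>: "0 \<le> \<epsilon>"
    and local: "\<And>s. \<bar>s\<bar> < \<delta> \<Longrightarrow> norm (F (t + s) - F t - A * of_real s) \<le> \<epsilon> * \<bar>s\<bar>"
  shows "norm (F (t + s) - F t - A * of_real s) \<le> \<epsilon> * \<bar>s\<bar> + (2 * M / \<delta>\<^sup>2 + norm A / \<delta>) * s\<^sup>2"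
proof (cases "\<bar>s\<bar> < \<delta>")
  case True
  have "0 \<le> M"
    using norm_ge_zero M by (rule order_trans)
  then have "0 \<le> (2 * M / \<delta>\<^sup>2 + norm A / \<delta>) * s\<^sup>2"
    using \<delta> by (intro mult_nonneg_nonneg add_nonneg_nonneg) auto
  then show ?thesis
    using local[OF True] by linarith
next
  case False
  then have s: "\<delta> \<le> \<bar>s\<bar>"
    by simp
  have "norm (F (t + s) - F t - A * of_real s) \<le> norm (F (t + s) - F t) + norm (A * of_real s)"
    by (rule norm_triangle_ineq4)
  also have "\<dots> \<le> norm (F (t + s)) + norm (F t) + norm A * \<bar>s\<bar>"
    using norm_triangle_ineq4[of "F (t + s)" "F t"] norm_mult_ineq[of A "of_real s"] by simp
  also have "\<dots> \<le> 2 * M * (s\<^sup>2 / \<delta>\<^sup>2) + norm A * (s\<^sup>2 / \<delta>)"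
  proof -
    have "\<delta>\<^sup>2 \<le> s\<^sup>2"
      using power_mono[OF s, of 2] \<delta> by simp
    then have "1 \<le> s\<^sup>2 / \<delta>\<^sup>2"
      using \<delta> by simp
    moreover have "0 \<le> M"
      using norm_ge_zero M by (rule order_trans)
    ultimately have "2 * M \<le> 2 * M * (s\<^sup>2 / \<delta>\<^sup>2)"
      using mult_left_mono[of 1 "s\<^sup>2 / \<delta>\<^sup>2" "2 * M"] by simp
    moreover have "\<bar>s\<bar> \<le> s\<^sup>2 / \<delta>"
      using mult_left_mono[OF s, of "\<bar>s\<bar>"] \<delta> by (simp add: le_divide_eq power2_eq_square abs_mult_self_eq)
    ultimately show ?thesis
      using M[of t] M[of "t + s"] by (smt (verit) mult_left_mono norm_ge_zero)
  qed
  also have "\<dots> \<le> \<epsilon> * \<bar>s\<bar> + (2 * M / \<delta>\<^sup>2 + norm A / \<delta>) * s\<^sup>2"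
    using \<epsilon> by (simp add: algebra_simps)
  finally show ?thesis .
qed

lemma tendsto_mult_0_if_le_plus_inverse:
  fixes x d :: "nat \<Rightarrow> real"
  assumes x: "x \<longlonglongrightarrow> 0" and x_nonneg: "\<And>j. 0 \<le> x j" and d: "\<And>j. 0 < d j"
    and le: "\<And>\<epsilon>. 0 < \<epsilon> \<Longrightarrow> \<exists>C. \<forall>j. x j * d j \<le> \<epsilon> + C / d j"
  shows "(\<lambda>j. x j * d j) \<longlonglongrightarrow> 0"
proof (rule order_tendstoI)
  show "eventually (\<lambda>j. a < x j * d j) sequentially" if "a < 0" for a
    using that x_nonneg d by (intro always_eventually allI) (smt (verit) mult_nonneg_nonneg)
  fix r :: real
  assume r: "0 < r"
  obtain C where C: "\<And>j. x j * d j \<le> r / 2 + C / d j"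
    using le[of "r / 2"] r by auto
  define D where "D = 2 * (\<bar>C\<bar> + 1) / r"
  have D: "0 < D"
    using r by (simp add: D_def)
  have "((\<lambda>j. x j * D) \<longlongrightarrow> 0 * D) sequentially"
    by (intro tendsto_mult x tendsto_const)
  then have "eventually (\<lambda>j. x j * D < r) sequentially"
    using r by (simp add: order_tendsto_iff)
  then show "eventually (\<lambda>j. x j * d j < r) sequentially"
  proof eventually_elim
    case (elim j)
    show ?case
    proof (cases "d j \<le> D")
      case True
      then show ?thesis
        using elim mult_left_mono[OF True x_nonneg[of j]] by linarith
    next
      case False
      then have "C / d j \<le> \<bar>C\<bar> / D"
        using D d[of j] by (intro frac_le) auto
      also have "\<bar>C\<bar> / D < r / 2"
        using r by (simp add: D_def field_simps)
      finally show ?thesis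
        using C[of j] by linarith
    qed
  qed
qed

lemma coeff_delta_b_tendsto_0_if_differentiable:
  fixes p q :: "nat \<Rightarrow> complex" and b :: "nat \<Rightarrow> real"
  assumes b_pos: "\<And>j. 0 < b j" and b_mono: "strict_mono b"
    and sp: "summable (\<lambda>k. norm (p k))" and sq: "summable (\<lambda>k. norm (q k))"
    and diff: "trig_series p q b differentiable (at t)"
  shows "(\<lambda>j. norm (p j) * delta_b b j) \<longlonglongrightarrow> 0"
proof (rule tendsto_mult_0_if_le_plus_inverse)
  show "(\<lambda>j. norm (p j)) \<longlonglongrightarrow> 0"
    using summable_LIMSEQ_zero[OF sp] .
  show "0 < delta_b b j" for j
    using b_pos b_mono by (rule delta_b_pos)
  obtain A where "(trig_series p q b has_vector_derivative A) (at t)"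
    using diff vector_derivative_works by blast
  then have local: "\<forall>\<epsilon>>0. \<exists>\<delta>>0. \<forall>s. \<bar>s\<bar> < \<delta> \<longrightarrow>
      norm (trig_series p q b (t + s) - trig_series p q b t - A * of_real s) \<le> \<epsilon> * \<bar>s\<bar>"
    unfolding has_vector_derivative_def has_derivative_at_alt
    by (metis add_diff_cancel_left' real_norm_def scaleR_conv_of_real mult.commute)
  fix \<eta> :: real
  assume \<eta>: "0 < \<eta>"
  define J where "J k = sinc4_moment k / sinc4_moment 0" for k
  have J: "0 \<le> J k" for k
    using sinc4_moment_nonneg sinc4_moment_0_pos by (simp add: J_def)
  define \<epsilon> where "\<epsilon> = \<eta> / (4 * (J 1 + 1))"
  have \<epsilon>: "0 < \<epsilon>" "4 * \<epsilon> * J 1 \<le> \<eta>"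
    using \<eta> J[of 1] by (simp_all add: \<epsilon>_def field_simps)
  obtain \<delta> where \<delta>: "0 < \<delta>" and near: "\<And>s. \<bar>s\<bar> < \<delta> \<Longrightarrow>
      norm (trig_series p q b (t + s) - trig_series p q b t - A * of_real s) \<le> \<epsilon> * \<bar>s\<bar>"
    using local \<epsilon>(1) by blast
  define M where "M = (\<Sum>k. norm (p k) + norm (q k))"
  define B where "B = 2 * M / \<delta>\<^sup>2 + norm A / \<delta>"
  have "0 \<le> M"
    using norm_trig_series_le[OF sp sq] norm_ge_zero order_trans unfolding M_def by blast
  then have B: "0 \<le> B"
    using \<delta> by (simp add: B_def)
  have "norm (p j) * delta_b b j \<le> \<eta> + 16 * B * J 2 / delta_b b j" for j
  proof -
    have "norm (p j) * delta_b b j * sinc4_moment 0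
        \<le> 4 * \<epsilon> * sinc4_moment 1 + 16 * B * sinc4_moment 2 / delta_b b j"
      using norm_increment_le_if_local_bound[OF norm_trig_series_le[OF sp sq] \<delta> less_imp_le[OF \<epsilon>(1)] near]
      by (intro norm_coeff_mult_delta_b_le[OF b_pos b_mono sp sq less_imp_le[OF \<epsilon>(1)] B])
        (simp add: M_def B_def)
    then have "norm (p j) * delta_b b j \<le> 4 * \<epsilon> * J 1 + 16 * B * J 2 / delta_b b j"
      using sinc4_moment_0_pos by (simp add: J_def field_simps)
    then show ?thesis
      using \<epsilon>(2) by linarith
  qed
  then show "\<exists>C. \<forall>j. norm (p j) * delta_b b j \<le> \<eta> + C / delta_b b j"
    by (metis times_divide_eq_left)
qed (simp)

lemma coeff_delta_b_bdd_if_lipschitz_at: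
  fixes p q :: "nat \<Rightarrow> complex" and b :: "nat \<Rightarrow> real"
  assumes b_pos: "\<And>j. 0 < b j" and b_mono: "strict_mono b"
    and sp: "summable (\<lambda>k. norm (p k))" and sq: "summable (\<lambda>k. norm (q k))"
    and lip: "lipschitz_at (trig_series p q b) t"
  shows "bdd_above (range (\<lambda>j. norm (p j) * delta_b b j))"
proof -
  obtain L \<delta> where L: "0 < L" and \<delta>: "0 < \<delta>" and lip_near: "\<And>t'. t - \<delta> < t' \<and> t' < t + \<delta> \<Longrightarrow>
      norm (trig_series p q b t' - trig_series p q b t) \<le> L * \<bar>t' - t\<bar>"
    using lip unfolding lipschitz_at_def by blast
  have near: "norm (trig_series p q b (t + s) - trig_series p q b t - 0 * of_real s) \<le> L * \<bar>s\<bar>"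
    if "\<bar>s\<bar> < \<delta>" for s
    using lip_near[of "t + s"] that by (simp add: abs_less_iff)
  define M where "M = (\<Sum>k. norm (p k) + norm (q k))"
  define B where "B = 2 * M / \<delta>\<^sup>2"
  have "0 \<le> M"
    using norm_trig_series_le[OF sp sq] norm_ge_zero order_trans unfolding M_def by blast
  then have B: "0 \<le> B"
    using \<delta> by (simp add: B_def)
  define K where "K = max ((4 * L * sinc4_moment 1 + 16 * B * sinc4_moment 2) / sinc4_moment 0)
    (\<Sum>k. norm (p k))"
  have "norm (p j) * delta_b b j \<le> K" for j
  proof (cases "1 \<le> delta_b b j")
    case True
    have "norm (p j) * delta_b b j * sinc4_moment 0
        \<le> 4 * L * sinc4_moment 1 + 16 * B * sinc4_moment 2 / delta_b b j"
      using norm_increment_le_if_local_bound[OF norm_trig_series_le[OF sp sq] \<delta> less_imp_le[OF L] near]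
      by (intro norm_coeff_mult_delta_b_le[where A = 0 and t = t, OF b_pos b_mono sp sq less_imp_le[OF L] B])
        (simp add: M_def B_def)
    also have "\<dots> \<le> 4 * L * sinc4_moment 1 + 16 * B * sinc4_moment 2"
      using True mult_nonneg_nonneg[OF B sinc4_moment_nonneg[of 2]]
      by (simp add: divide_le_eq mult_le_cancel_left1)
    finally have "norm (p j) * delta_b b j \<le> (4 * L * sinc4_moment 1 + 16 * B * sinc4_moment 2) / sinc4_moment 0"
      using sinc4_moment_0_pos by (simp add: pos_le_divide_eq)
    then show ?thesis
      by (simp add: K_def)
  next
    case False
    then have "norm (p j) * delta_b b j \<le> norm (p j)"
      using delta_b_pos[OF b_pos b_mono, of j] by (simp add: mult_left_le)
    also have "\<dots> \<le> (\<Sum>k. norm (p k))"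
      using sum_le_suminf[OF sp, of "{j}"] by simp
    finally show ?thesis
      by (simp add: K_def)
  qed
  then show ?thesis
    by (intro bdd_aboveI) auto
qed

lemma trig_series_regularity:
  fixes p q :: "nat \<Rightarrow> complex" and b :: "nat \<Rightarrow> real"
  assumes b_pos: "\<And>j. 0 < b j" and b_mono: "strict_mono b"
    and sp: "summable (\<lambda>k. norm (p k))" and sq: "summable (\<lambda>k. norm (q k))"
    and no_decay: "\<not> (\<lambda>j. norm (p j) * delta_b b j) \<longlonglongrightarrow> 0"
  shows "bounded (range (trig_series p q b))" and "continuous_on UNIV (trig_series p q b)"
    and "\<not> trig_series p q b differentiable (at t)"
    and "\<not> bdd_above (range (\<lambda>j. norm (p j) * delta_b b j)) \<Longrightarrow> \<not> lipschitz_at (trig_series p q b) t"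
proof -
  show "bounded (range (trig_series p q b))"
    unfolding bounded_iff using norm_trig_series_le[OF sp sq] by blast
  show "continuous_on UNIV (trig_series p q b)"
    by (rule continuous_on_trig_series[OF sp sq])
  show "\<not> trig_series p q b differentiable (at t)"
    using coeff_delta_b_tendsto_0_if_differentiable[OF b_pos b_mono sp sq] no_decay by blast
  show "\<not> lipschitz_at (trig_series p q b) t" if "\<not> bdd_above (range (\<lambda>j. norm (p j) * delta_b b j))"
    using coeff_delta_b_bdd_if_lipschitz_at[OF b_pos b_mono sp sq, where t = t] that by blast
qed

lemma lipschitz_at_of_real_iff:
  "lipschitz_at (\<lambda>t. of_real (g t) :: 'a::real_normed_algebra_1) t0 \<longleftrightarrow> lipschitz_at g t0"
  unfolding lipschitz_at_def by (simp flip: of_real_diff)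

lemma bdd_above_range_divide_iff:
  fixes x :: "'a \<Rightarrow> real"
  assumes "0 < c"
  shows "bdd_above (range (\<lambda>j. x j / c)) \<longleftrightarrow> bdd_above (range x)"
proof
  assume "bdd_above (range (\<lambda>j. x j / c))"
  then obtain M where "\<And>j. x j / c \<le> M"
    by (auto simp: bdd_above_def)
  then have "\<And>j. x j \<le> M * c"
    using assms by (simp add: divide_le_eq)
  then show "bdd_above (range x)"
    by (rule bdd_aboveI2)
next
  assume "bdd_above (range x)"
  then obtain M where "\<And>j. x j \<le> M"
    by (auto simp: bdd_above_def)
  then have "\<And>j. x j / c \<le> M / c"
    using assms by (simp add: divide_right_mono)
  then show "bdd_above (range (\<lambda>j. x j / c))"
    by (rule bdd_aboveI2)
qed

lemma bounded_range_of_real_iff: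
  "bounded (range (\<lambda>t. of_real (g t) :: 'a::real_normed_algebra_1)) \<longleftrightarrow> bounded (range g)"
  by (simp add: bounded_iff)

lemma differentiable_at_of_real:
  "g differentiable (at t) \<Longrightarrow> (\<lambda>t. of_real (g t) :: complex) differentiable (at t)"
  using differentiable_chain_at[OF _ of_real_differentiable] by (simp add: o_def)

lemma trig_series_real_valued_regularity:
  fixes p q :: "nat \<Rightarrow> complex" and b :: "nat \<Rightarrow> real" and g :: "real \<Rightarrow> real"
  assumes b_pos: "\<And>j. 0 < b j" and b_mono: "strict_mono b"
    and sp: "summable (\<lambda>k. norm (p k))" and sq: "summable (\<lambda>k. norm (q k))"
    and no_decay: "\<not> (\<lambda>j. norm (p j) * delta_b b j) \<longlonglongrightarrow> 0"
    and g: "(\<lambda>t. of_real (g t)) = trig_series p q b"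
  shows "bounded (range g)" and "\<not> g differentiable (at t)"
    and "\<not> bdd_above (range (\<lambda>j. norm (p j) * delta_b b j)) \<Longrightarrow> \<not> lipschitz_at g t"
  using trig_series_regularity[OF b_pos b_mono sp sq no_decay, folded g]
  by (auto simp: bounded_range_of_real_iff lipschitz_at_of_real_iff dest: differentiable_at_of_real)

lemma of_real_Re_Im_trig_series:
  assumes "summable (\<lambda>k. norm (p k))"
  shows "of_real (Re (trig_series p (\<lambda>_. 0) b t)) = trig_series (\<lambda>k. p k / 2) (\<lambda>k. cnj (p k) / 2) b t"
    and "of_real (Im (trig_series p (\<lambda>_. 0) b t))
           = trig_series (\<lambda>k. p k / (2 * \<i>)) (\<lambda>k. - cnj (p k) / (2 * \<i>)) b t"
proof -
  define z where "z = trig_series p (\<lambda>_. 0) b t"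
  have w: "(\<lambda>k. p k * cis (b k * t)) sums z"
    using summable_trig_series_terms[OF assms, of "\<lambda>_. 0"]
    by (simp add: z_def trig_series_def summable_sums summable_norm_cancel)
  have cnj_w: "(\<lambda>k. cnj (p k) * cis (- (b k * t))) sums cnj z"
    using sums_cnj[THEN iffD2, OF w] by (simp add: cis_cnj)
  have "(\<lambda>k. p k / 2 * cis (b k * t) + cnj (p k) / 2 * cis (- (b k * t))) sums ((z + cnj z) / 2)"
    using sums_divide[OF sums_add[OF w cnj_w], of 2] by (simp add: add_divide_distrib)
  then show "of_real (Re z) = trig_series (\<lambda>k. p k / 2) (\<lambda>k. cnj (p k) / 2) b t"
    by (simp add: trig_series_def sums_iff complex_add_cnj)
  have "(\<lambda>k. p k / (2 * \<i>) * cis (b k * t) + - cnj (p k) / (2 * \<i>) * cis (- (b k * t)))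
      sums ((z - cnj z) / (2 * \<i>))"
  proof -
    have "(\<lambda>k. p k / (2 * \<i>) * cis (b k * t) + - cnj (p k) / (2 * \<i>) * cis (- (b k * t)))
        = (\<lambda>k. (p k * cis (b k * t) - cnj (p k) * cis (- (b k * t))) / (2 * \<i>))"
      by (rule ext) (simp add: field_simps)
    then show ?thesis
      using sums_divide[OF sums_diff[OF w cnj_w], of "2 * \<i>"] by simp
  qed
  moreover have "(z - cnj z) / (2 * \<i>) = of_real (Im z)"
    by (simp add: complex_eq_iff Re_divide Im_divide power2_eq_square)
  ultimately show "of_real (Im z) = trig_series (\<lambda>k. p k / (2 * \<i>)) (\<lambda>k. - cnj (p k) / (2 * \<i>)) b t"
    by (simp add: trig_series_def sums_iff)
qed

theorem theorem3p1:
  fixes a :: "nat \<Rightarrow> complex" and b :: "nat \<Rightarrow> real" and f :: "real \<Rightarrow> complex"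
  assumes abs_sum: "summable (\<lambda>j. norm (a j))"
    and b_pos: "\<And>j. b j > 0"
    and b_mono: "strict_mono b"
    and b_inf: "filterlim b at_top sequentially"
    and not_zero: "\<not> ((\<lambda>j. a j * complex_of_real (delta_b b j)) \<longlonglongrightarrow> 0)"
    and f_def: "\<And>t. f t = (\<Sum>j. a j * exp (\<i> * complex_of_real (b j * t)))"
  shows "bounded (range f) \<and> continuous_on UNIV f \<and> (\<forall>t. \<not> f differentiable (at t))
       \<and> bounded (range (\<lambda>t. Re (f t))) \<and> continuous_on UNIV (\<lambda>t. Re (f t))
       \<and> (\<forall>t. \<not> (\<lambda>t. Re (f t)) differentiable (at t))
       \<and> bounded (range (\<lambda>t. Im (f t))) \<and> continuous_on UNIV (\<lambda>t. Im (f t))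
       \<and> (\<forall>t. \<not> (\<lambda>t. Im (f t)) differentiable (at t))
       \<and> (\<not> bdd_above (range (\<lambda>j. norm (a j) * delta_b b j)) \<longrightarrow>
            (\<forall>t0. \<not> lipschitz_at f t0 \<and> \<not> lipschitz_at (\<lambda>t. Re (f t)) t0
                  \<and> \<not> lipschitz_at (\<lambda>t. Im (f t)) t0))"
proof -
  have f: "f = trig_series a (\<lambda>_. 0) b"
    unfolding f_def[abs_def] trig_series_def[abs_def] cis_conv_exp by simp
  have Re_f: "(\<lambda>t. of_real (Re (f t))) = trig_series (\<lambda>k. a k / 2) (\<lambda>k. cnj (a k) / 2) b"
    and Im_f: "(\<lambda>t. of_real (Im (f t))) = trig_series (\<lambda>k. a k / (2 * \<i>)) (\<lambda>k. - cnj (a k) / (2 * \<i>)) b"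
    using of_real_Re_Im_trig_series[OF abs_sum] by (simp_all add: f fun_eq_iff)
  have "(\<lambda>j. norm (a j * of_real (delta_b b j))) = (\<lambda>j. norm (a j) * delta_b b j)"
    using delta_b_pos[OF b_pos b_mono] by (simp add: norm_mult less_imp_le)
  then have no_decay: "\<not> (\<lambda>j. norm (a j) * delta_b b j) \<longlonglongrightarrow> 0"
    using not_zero tendsto_norm_zero_iff by metis
  have half: "summable (\<lambda>k. norm (a k / 2))" "summable (\<lambda>k. norm (cnj (a k) / 2))"
    "summable (\<lambda>k. norm (a k / (2 * \<i>)))" "summable (\<lambda>k. norm (- cnj (a k) / (2 * \<i>)))"
    "\<not> (\<lambda>j. norm (a j / 2) * delta_b b j) \<longlonglongrightarrow> 0"
    "\<not> (\<lambda>j. norm (a j / (2 * \<i>)) * delta_b b j) \<longlonglongrightarrow> 0"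
    using abs_sum no_decay by (simp_all add: norm_divide norm_mult)
  have "summable (\<lambda>k. norm (0 :: complex))"
    by simp
  note regular_f = trig_series_regularity[OF b_pos b_mono abs_sum this no_decay, folded f]
  note regular_Re = trig_series_real_valued_regularity[OF b_pos b_mono half(1,2,5) Re_f]
  note regular_Im = trig_series_real_valued_regularity[OF b_pos b_mono half(3,4,6) Im_f]
  show ?thesis
    using regular_f regular_Re regular_Im
    by (auto simp: norm_divide norm_mult bdd_above_range_divide_iff intro: continuous_intros)
qed

end
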